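(* Let $\mu\in M(\mathbb{R}^{2d})$ and $\varphi\in M^1(\mathbb{R}^d)$ be such that $B_\mu^\varphi$ is not the zero operator. Then $B_\mu^\varphi$ is not a compact operator on $L^2(\mathbb{R}^d)$.
   Context: $M(\mathbb{R}^{2d})$ is the space of complex finite Borel measures on $\mathbb{R}^{2d}$ with total variation norm, and $\mu*F(z)=\int F(z-w)d\mu(w)$. For $x,\omega\in\mathbb{R}^d$ let $\pi(x,\omega)f(t)=e^{2\pi i\omega\cdot t}f(t-x)$. The STFT is $V_\varphi\psi(x,\omega)=\langle\psi,\pi(x,\omega)\varphi\rangle=\int\psi(t)\overline{\varphi(t-x)}e^{-2\pi i\omega\cdot t}dt$, the synthesis is $V_\varphi^*F=\int_{\mathbb{R}^{2d}}F(z)\pi(z)\varphi\,dz$ (weakly), and $B_\mu^\varphi\psi=V_\varphi^*(\mu*V_\varphi\psi)$, a bounded operator on $L^2(\mathbb{R}^d)$. $M^1(\mathbb{R}^d)$ (Feichtinger's algebra) is the set of tempered distributions $\psi$ with $\Vert V_g\psi\Vert_{L^1(\mathbb{R}^{2d})}<\infty$ for a fixed nonzero Schwartz window $g$. *)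

theory Defs
  imports "HOL-Analysis.Analysis"
begin

text \<open>R^d is modelled by an arbitrary Euclidean space 'd, R^{2d} by 'd \<times> 'd
  (points z = (x, \<omega>)).  L^2 functions are Borel square-integrable functions
  (every L^2 class has a Borel representative).\<close>

definition L2 :: "('d::euclidean_space \<Rightarrow> complex) \<Rightarrow> bool" where
  "L2 f \<longleftrightarrow> f \<in> borel_measurable lborel \<and> integrable lborel (\<lambda>t. (cmod (f t))\<^sup>2)"

definition l2inner :: "('d::euclidean_space \<Rightarrow> complex) \<Rightarrow> ('d \<Rightarrow> complex) \<Rightarrow> complex" where
  "l2inner f h = (LINT t|lborel. f t * cnj (h t))"

definition l2norm :: "('d::euclidean_space \<Rightarrow> complex) \<Rightarrow> real" where
  "l2norm f = sqrt (LINT t|lborel. (cmod (f t))\<^sup>2)"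

definition tfshift :: "'d::euclidean_space \<times> 'd \<Rightarrow> ('d \<Rightarrow> complex) \<Rightarrow> 'd \<Rightarrow> complex" where
  "tfshift z f t = cis (2 * pi * (snd z \<bullet> t)) * f (t - fst z)"

definition stft :: "('d::euclidean_space \<Rightarrow> complex) \<Rightarrow> ('d \<Rightarrow> complex) \<Rightarrow> 'd \<times> 'd \<Rightarrow> complex" where
  "stft \<phi> \<psi> z = (LINT t|lborel. \<psi> t * cnj (\<phi> (t - fst z)) * cis (- 2 * pi * (snd z \<bullet> t)))"

text \<open>A complex finite Borel measure on R^{2d} is represented by four finite positive
  Borel measures M 0, ..., M 3 via mu = M 0 + i M 1 - M 2 - i M 3 (every complex
  measure has such a Jordan-type decomposition, and every such combination is one).\<close>
definition cmeasure :: "(nat \<Rightarrow> ('d::euclidean_space \<times> 'd) measure) \<Rightarrow> bool" where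
  "cmeasure M \<longleftrightarrow> (\<forall>k<4. finite_measure (M k) \<and> sets (M k) = sets borel)"

definition mconv :: "(nat \<Rightarrow> ('d::euclidean_space \<times> 'd) measure) \<Rightarrow> ('d \<times> 'd \<Rightarrow> complex) \<Rightarrow> 'd \<times> 'd \<Rightarrow> complex" where
  "mconv M F z = (\<Sum>k<4. \<i> ^ k * (\<integral>w. F (z - w) \<partial>(M k)))"

text \<open>T is the operator B_mu^phi = V_phi^*(mu * V_phi psi), with the synthesis
  operator understood weakly: <B psi, f> = int (mu * V_phi psi)(z) <pi(z) phi, f> dz.\<close>
definition is_Bmu :: "(nat \<Rightarrow> ('d::euclidean_space \<times> 'd) measure) \<Rightarrow> ('d \<Rightarrow> complex)
    \<Rightarrow> (('d \<Rightarrow> complex) \<Rightarrow> ('d \<Rightarrow> complex)) \<Rightarrow> bool" where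
  "is_Bmu M \<phi> T \<longleftrightarrow> (\<forall>\<psi>. L2 \<psi> \<longrightarrow> L2 (T \<psi>) \<and>
     (\<forall>f. L2 f \<longrightarrow> l2inner (T \<psi>) f =
        (LINT z|lborel. mconv M (stft \<phi> \<psi>) z * l2inner (tfshift z \<phi>) f)))"

definition gauss :: "'d::euclidean_space \<Rightarrow> complex" where
  "gauss t = complex_of_real (exp (- pi * (norm t)\<^sup>2))"

definition M1 :: "('d::euclidean_space \<Rightarrow> complex) \<Rightarrow> bool" where
  "M1 \<psi> \<longleftrightarrow> L2 \<psi> \<and> integrable lborel (stft gauss \<psi>)"

definition compact_op :: "(('d::euclidean_space \<Rightarrow> complex) \<Rightarrow> ('d \<Rightarrow> complex)) \<Rightarrow> bool" where
  "compact_op T \<longleftrightarrow> (\<forall>\<psi>s::nat \<Rightarrow> 'd \<Rightarrow> complex. (\<forall>n. L2 (\<psi>s n)) \<and> bounded (range (\<lambda>n. l2norm (\<psi>s n))) \<longrightarrow>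
     (\<exists>r h. strict_mono r \<and> L2 h \<and>
        (\<lambda>n. l2norm (\<lambda>t. T (\<psi>s (r n)) t - h t)) \<longlonglongrightarrow> 0))"

end

theory Submission
  imports Defs
begin

text \<open>Modulating \<psi> translates its STFT in frequency, and in the weak definition of B_\<mu> this
  translation can be moved onto the test function; hence B_\<mu> commutes with every modulation
  M_a f(t) = e^(2\<pi>i a\<cdot>t) f(t).  For a unit vector e the sequence M_(ne) \<psi> is bounded in L^2, so
  if B_\<mu> were compact, a subsequence of B_\<mu> M_(ne) \<psi> = M_(ne) B_\<mu> \<psi> would converge in L^2 to
  some h.  By the Riemann-Lebesgue lemma M_(ne) B_\<mu> \<psi> tends weakly to 0, so h = 0, and then
  \<parallel>B_\<mu> \<psi>\<parallel> = \<parallel>M_(ne) B_\<mu> \<psi> - h\<parallel> tends to 0 along the subsequence, i.e. B_\<mu> \<psi> = 0.\<close>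

section \<open>Square-integrable functions\<close>

lemma cis_measurable[measurable (raw)]:
  "f \<in> borel_measurable M \<Longrightarrow> (\<lambda>x. cis (f x)) \<in> borel_measurable M"
  using measurable_compose[of f M borel cis borel]
  by (simp add: borel_measurable_continuous_onI continuous_on_cis)

lemma cnj_measurable[measurable (raw)]:
  "f \<in> borel_measurable M \<Longrightarrow> (\<lambda>x. cnj (f x :: complex)) \<in> borel_measurable M"
  using measurable_compose[of f M borel cnj borel]
  by (simp add: borel_measurable_continuous_onI)

lemma integrable_mult_if_square_integrable:
  fixes u v :: "'a \<Rightarrow> complex"
  assumes [measurable]: "u \<in> borel_measurable M" "v \<in> borel_measurable M"
    and "integrable M (\<lambda>x. (cmod (u x))\<^sup>2)" "integrable M (\<lambda>x. (cmod (v x))\<^sup>2)"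
  shows "integrable M (\<lambda>x. u x * v x)"
proof (rule Bochner_Integration.integrable_bound)
  show "integrable M (\<lambda>x. (cmod (u x))\<^sup>2 + (cmod (v x))\<^sup>2)"
    using assms(3,4) by simp
  show "AE x in M. norm (u x * v x) \<le> norm ((cmod (u x))\<^sup>2 + (cmod (v x))\<^sup>2)"
  proof (rule AE_I2)
    fix x
    have "2 * cmod (u x) * cmod (v x) \<le> (cmod (u x))\<^sup>2 + (cmod (v x))\<^sup>2"
      by (rule sum_squares_bound)
    moreover have "0 \<le> cmod (u x) * cmod (v x)" by simp
    ultimately have "cmod (u x) * cmod (v x) \<le> (cmod (u x))\<^sup>2 + (cmod (v x))\<^sup>2"
      by linarith
    then show "norm (u x * v x) \<le> norm ((cmod (u x))\<^sup>2 + (cmod (v x))\<^sup>2)"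
      by (simp add: norm_mult)
  qed
qed simp

lemma norm_integral_mult_le:
  fixes u v :: "'a \<Rightarrow> complex"
  assumes [measurable]: "u \<in> borel_measurable M" "v \<in> borel_measurable M"
    and iu: "integrable M (\<lambda>x. (cmod (u x))\<^sup>2)" and iv: "integrable M (\<lambda>x. (cmod (v x))\<^sup>2)"
  shows "cmod (\<integral>x. u x * v x \<partial>M) \<le> sqrt (\<integral>x. (cmod (u x))\<^sup>2 \<partial>M) * sqrt (\<integral>x. (cmod (v x))\<^sup>2 \<partial>M)"
proof -
  define A where "A = (\<integral>x. cmod (u x) * cmod (v x) \<partial>M)"
  have "integrable M (\<lambda>x. cmod (u x) * cmod (v x))"
    using integrable_mult_if_square_integrable[OF assms] by (simp flip: norm_mult)
  then have "ennreal A = (\<integral>\<^sup>+x. ennreal (cmod (u x) * cmod (v x)) \<partial>M)"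
    unfolding A_def by (subst nn_integral_eq_integral) simp_all
  also have "\<dots> = (\<integral>\<^sup>+x. ennreal (cmod (u x)) * ennreal (cmod (v x)) \<partial>M)"
    by (simp add: ennreal_mult)
  finally have "ennreal A = (\<integral>\<^sup>+x. ennreal (cmod (u x)) * ennreal (cmod (v x)) \<partial>M)" .
  then have "(ennreal A)\<^sup>2 \<le> (\<integral>\<^sup>+x. ennreal (cmod (u x)) ^ 2 \<partial>M) * (\<integral>\<^sup>+x. ennreal (cmod (v x)) ^ 2 \<partial>M)"
    using Cauchy_Schwarz_nn_integral[of "\<lambda>x. ennreal (cmod (u x))" M "\<lambda>x. ennreal (cmod (v x))"]
    by simp
  also have "\<dots> = (\<integral>\<^sup>+x. ennreal ((cmod (u x))\<^sup>2) \<partial>M) * (\<integral>\<^sup>+x. ennreal ((cmod (v x))\<^sup>2) \<partial>M)"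
    by (simp add: ennreal_power)
  also have "\<dots> = ennreal ((\<integral>x. (cmod (u x))\<^sup>2 \<partial>M) * (\<integral>x. (cmod (v x))\<^sup>2 \<partial>M))"
    using iu iv by (simp add: nn_integral_eq_integral ennreal_mult)
  moreover have "A \<ge> 0" unfolding A_def by simp
  ultimately have "A\<^sup>2 \<le> (\<integral>x. (cmod (u x))\<^sup>2 \<partial>M) * (\<integral>x. (cmod (v x))\<^sup>2 \<partial>M)"
    by (simp add: ennreal_power)
  then have "A \<le> sqrt (\<integral>x. (cmod (u x))\<^sup>2 \<partial>M) * sqrt (\<integral>x. (cmod (v x))\<^sup>2 \<partial>M)"
    by (simp add: real_le_rsqrt real_sqrt_mult[symmetric])
  moreover have "cmod (\<integral>x. u x * v x \<partial>M) \<le> A"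
    unfolding A_def using integral_norm_bound[of M "\<lambda>x. u x * v x"] by (simp add: norm_mult)
  ultimately show ?thesis by linarith
qed

lemma L2_mult_bounded:
  assumes "L2 u" and [measurable]: "w \<in> borel_measurable lborel" and "\<And>t. cmod (w t) \<le> C"
  shows "L2 (\<lambda>t. w t * u t)"
proof -
  have [measurable]: "u \<in> borel_measurable lborel" using assms(1) by (simp add: L2_def)
  have "integrable lborel (\<lambda>t. C\<^sup>2 * (cmod (u t))\<^sup>2)" using assms(1) by (simp add: L2_def)
  then have "integrable lborel (\<lambda>t. (cmod (w t * u t))\<^sup>2)"
  proof (rule Bochner_Integration.integrable_bound)
    have "C \<ge> 0" using assms(3) norm_ge_zero order_trans by blast
    then show "AE t in lborel. norm ((cmod (w t * u t))\<^sup>2) \<le> norm (C\<^sup>2 * (cmod (u t))\<^sup>2)"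
      using assms(3) by (intro AE_I2) (simp add: norm_mult power_mult_distrib mult_right_mono power_mono)
  qed measurable
  then show ?thesis by (simp add: L2_def)
qed

lemma L2_add:
  assumes "L2 u" "L2 v"
  shows "L2 (\<lambda>t. u t + v t)"
proof -
  have [measurable]: "u \<in> borel_measurable lborel" "v \<in> borel_measurable lborel"
    using assms by (simp_all add: L2_def)
  have "integrable lborel (\<lambda>t. 2 * (cmod (u t))\<^sup>2 + 2 * (cmod (v t))\<^sup>2)"
    using assms by (simp add: L2_def)
  then have "integrable lborel (\<lambda>t. (cmod (u t + v t))\<^sup>2)"
  proof (rule Bochner_Integration.integrable_bound)
    show "AE t in lborel. norm ((cmod (u t + v t))\<^sup>2) \<le> norm (2 * (cmod (u t))\<^sup>2 + 2 * (cmod (v t))\<^sup>2)"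
    proof (rule AE_I2)
      fix t
      have "(cmod (u t + v t))\<^sup>2 \<le> (cmod (u t) + cmod (v t))\<^sup>2"
        by (intro power_mono norm_triangle_ineq) simp
      also have "\<dots> \<le> 2 * (cmod (u t))\<^sup>2 + 2 * (cmod (v t))\<^sup>2"
        using sum_squares_bound[of "cmod (u t)" "cmod (v t)"] by (simp add: power2_sum)
      finally show "norm ((cmod (u t + v t))\<^sup>2) \<le> norm (2 * (cmod (u t))\<^sup>2 + 2 * (cmod (v t))\<^sup>2)"
        by simp
    qed
  qed measurable
  then show ?thesis by (simp add: L2_def)
qed

lemma L2_diff: "L2 u \<Longrightarrow> L2 v \<Longrightarrow> L2 (\<lambda>t. u t - v t)"
  using L2_add[of u "\<lambda>t. - 1 * v t"] L2_mult_bounded[of v "\<lambda>_. - 1" 1] by simp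

lemma L2_sum: "finite A \<Longrightarrow> (\<And>n. n \<in> A \<Longrightarrow> L2 (u n)) \<Longrightarrow> L2 (\<lambda>t. \<Sum>n\<in>A. u n t)"
proof (induction A rule: finite_induct)
  case empty
  then show ?case by (simp add: L2_def)
next
  case (insert n A)
  then show ?case by (simp add: L2_add)
qed

lemma integrable_l2inner: "L2 u \<Longrightarrow> L2 v \<Longrightarrow> integrable lborel (\<lambda>t. u t * cnj (v t))"
  by (rule integrable_mult_if_square_integrable) (auto simp: L2_def intro: cnj_measurable)

lemma norm_l2inner_le: "L2 u \<Longrightarrow> L2 v \<Longrightarrow> cmod (l2inner u v) \<le> l2norm u * l2norm v"
  unfolding l2inner_def l2norm_def
  using norm_integral_mult_le[of u lborel "\<lambda>t. cnj (v t)"] cnj_measurable[of v lborel]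
  by (simp add: L2_def)

lemma l2inner_self: "l2inner u u = complex_of_real ((l2norm u)\<^sup>2)"
proof -
  have "l2inner u u = (\<integral>t. complex_of_real ((cmod (u t))\<^sup>2) \<partial>lborel)"
    unfolding l2inner_def by (intro Bochner_Integration.integral_cong refl complex_norm_square[symmetric])
  then show ?thesis by (simp add: l2norm_def del: of_real_power)
qed

lemma l2inner_diff_left:
  "L2 u \<Longrightarrow> L2 v \<Longrightarrow> L2 f \<Longrightarrow> l2inner (\<lambda>t. u t - v t) f = l2inner u f - l2inner v f"
  unfolding l2inner_def
  by (simp add: integrable_l2inner left_diff_distrib flip: Bochner_Integration.integral_diff)

lemma l2norm_eq_0_iff:
  assumes "L2 u"
  shows "l2norm u = 0 \<longleftrightarrow> (AE t in lborel. u t = 0)"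
proof -
  have "l2norm u = 0 \<longleftrightarrow> (AE t in lborel. (cmod (u t))\<^sup>2 = 0)"
    unfolding l2norm_def using assms by (subst integral_nonneg_eq_0_iff_AE[symmetric]) (simp_all add: L2_def)
  then show ?thesis by simp
qed

lemma l2norm_cong_AE:
  assumes "L2 u" "L2 v" "AE t in lborel. u t = v t"
  shows "l2norm u = l2norm v"
proof -
  have [measurable]: "u \<in> borel_measurable lborel" "v \<in> borel_measurable lborel"
    using assms(1,2) by (simp_all add: L2_def)
  have "AE t in lborel. (cmod (u t))\<^sup>2 = (cmod (v t))\<^sup>2"
    using assms(3) by eventually_elim simp
  then show ?thesis by (simp add: l2norm_def integral_cong_AE)
qed

lemma AE_eq_if_l2inner_eq:
  assumes "L2 u" "L2 v" and eq: "\<And>f. L2 f \<Longrightarrow> l2inner u f = l2inner v f"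
  shows "AE t in lborel. u t = v t"
proof -
  define w where "w t = u t - v t" for t
  have w: "L2 w" unfolding w_def using assms(1,2) by (rule L2_diff)
  have "l2inner w w = 0"
    unfolding w_def using assms(1,2) w[unfolded w_def] by (simp add: l2inner_diff_left eq)
  then have "l2norm w = 0" by (simp add: l2inner_self)
  with w have "AE t in lborel. w t = 0" by (simp add: l2norm_eq_0_iff)
  then show ?thesis by eventually_elim (simp add: w_def)
qed

lemma l2inner_tendsto_if_l2norm_tendsto:
  assumes "\<And>n. L2 (u n)" "L2 h" "L2 f"
    and lim: "(\<lambda>n. l2norm (\<lambda>t. u n t - h t)) \<longlonglongrightarrow> 0"
  shows "(\<lambda>n. l2inner (u n) f) \<longlonglongrightarrow> l2inner h f"
proof -
  have "cmod (l2inner (u n) f - l2inner h f) \<le> l2norm (\<lambda>t. u n t - h t) * l2norm f" for n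
    using assms(1-3) by (simp add: norm_l2inner_le L2_diff flip: l2inner_diff_left)
  then have "\<forall>\<^sub>F n in sequentially. norm (l2inner (u n) f - l2inner h f) \<le> l2norm (\<lambda>t. u n t - h t) * l2norm f"
    by simp
  then have "(\<lambda>n. l2inner (u n) f - l2inner h f) \<longlonglongrightarrow> 0"
    by (rule Lim_null_comparison) (rule tendsto_mult_left_zero[OF lim])
  then show ?thesis by (simp add: LIM_zero_iff)
qed

lemma l2inner_commute: "l2inner u v = cnj (l2inner v u)"
  unfolding l2inner_def
  using Bochner_Integration.integral_cnj[of lborel "\<lambda>t. v t * cnj (u t)"] by (simp add: mult.commute)

lemma l2inner_sum_left:
  assumes "finite A" "\<And>n. n \<in> A \<Longrightarrow> L2 (w n)" "L2 f"
  shows "l2inner (\<lambda>t. \<Sum>n\<in>A. c n * w n t) f = (\<Sum>n\<in>A. c n * l2inner (w n) f)"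
  unfolding l2inner_def using assms
  by (simp add: sum_distrib_right mult.assoc integrable_l2inner flip: Bochner_Integration.integral_sum)

lemma bessel_l2inner:
  fixes w :: "nat \<Rightarrow> 'd::euclidean_space \<Rightarrow> complex"
  assumes G: "L2 G" and w: "\<And>n. L2 (w n)"
    and orth: "\<And>n m. l2inner (w n) (w m) = (if n = m then complex_of_real V else 0)"
  shows "(\<Sum>n<N. (cmod (l2inner G (w n)))\<^sup>2) \<le> V * (l2norm G)\<^sup>2"
proof -
  define c where "c n = l2inner G (w n)" for n
  define S where "S t = (\<Sum>n<N. c n * w n t)" for t
  define \<Sigma> where "\<Sigma> = (\<Sum>n<N. (cmod (c n))\<^sup>2)"
  have "L2 (\<lambda>t. c n * w n t)" for n
    by (rule L2_mult_bounded[OF w, where C="cmod (c n)"]) simp_all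
  then have S: "L2 S"
    unfolding S_def by (intro L2_sum) simp_all
  have S_left: "l2inner S f = (\<Sum>n<N. c n * l2inner (w n) f)" if "L2 f" for f
    unfolding S_def using w that by (simp add: l2inner_sum_left)
  have "complex_of_real V = l2inner (w 0) (w 0)" by (simp add: orth)
  then have V: "V \<ge> 0" by (simp add: l2inner_self del: of_real_power)
  have "l2inner S G = (\<Sum>n<N. c n * cnj (c n))"
    using G by (simp add: S_left c_def l2inner_commute[of "w _"])
  then have SG: "l2inner S G = complex_of_real \<Sigma>"
    by (simp add: \<Sigma>_def of_real_sum complex_norm_square del: of_real_power)
  have "l2inner S (w n) = c n * complex_of_real V" if "n < N" for n
    using w that by (simp add: S_left orth if_distrib cong: if_cong)
  then have "l2inner S S = (\<Sum>n<N. c n * cnj (c n) * complex_of_real V)"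
    using S by (simp add: S_left l2inner_commute[of "w _" S] mult.assoc)
  also have "\<dots> = complex_of_real (V * \<Sigma>)"
    unfolding \<Sigma>_def sum_distrib_left of_real_sum
    by (intro sum.cong refl) (simp add: complex_norm_square[symmetric] del: of_real_power)
  finally have "(l2norm S)\<^sup>2 = V * \<Sigma>"
    unfolding l2inner_self of_real_eq_iff .
  have "\<Sigma> \<ge> 0" unfolding \<Sigma>_def by (simp add: sum_nonneg)
  then have "\<Sigma> = cmod (l2inner S G)" by (simp add: SG)
  also have "\<dots> \<le> l2norm S * l2norm G" by (rule norm_l2inner_le[OF S G])
  finally have "\<Sigma>\<^sup>2 \<le> (l2norm S)\<^sup>2 * (l2norm G)\<^sup>2"
    using \<open>\<Sigma> \<ge> 0\<close> by (metis power_mono power_mult_distrib)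
  then have "\<Sigma> * \<Sigma> \<le> \<Sigma> * (V * (l2norm G)\<^sup>2)"
    using \<open>(l2norm S)\<^sup>2 = V * \<Sigma>\<close> by (simp add: power2_eq_square algebra_simps)
  then show ?thesis
    using V \<open>\<Sigma> \<ge> 0\<close> by (cases "\<Sigma> = 0") (simp_all add: \<Sigma>_def c_def)
qed

section \<open>Modulations and the covariance of B_\<mu>\<close>

definition modulation :: "'d::euclidean_space \<Rightarrow> ('d \<Rightarrow> complex) \<Rightarrow> 'd \<Rightarrow> complex" where
  "modulation a f t = cis (2 * pi * (a \<bullet> t)) * f t"

lemma norm_modulation [simp]: "cmod (modulation a f t) = cmod (f t)"
  by (simp add: modulation_def norm_mult)

lemma L2_modulation: "L2 f \<Longrightarrow> L2 (modulation a f)"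
  unfolding modulation_def by (rule L2_mult_bounded[where C=1]) simp_all

lemma l2norm_modulation [simp]: "l2norm (modulation a f) = l2norm f"
  by (simp add: l2norm_def)

lemma l2inner_modulation_right: "l2inner u (modulation (- a) f) = l2inner (modulation a u) f"
  unfolding l2inner_def modulation_def
  by (intro Bochner_Integration.integral_cong refl) (simp add: cis_cnj algebra_simps)

lemma stft_modulation: "stft \<phi> (modulation a \<psi>) z = stft \<phi> \<psi> (z - (0, a))"
  unfolding stft_def modulation_def
  by (intro Bochner_Integration.integral_cong refl) (simp add: cis_mult algebra_simps)

lemma mconv_translate: "mconv M (\<lambda>z. F (z - c)) z = mconv M F (z - c)"
  unfolding mconv_def by (simp only: Groups.diff_right_commute[of z c])

lemma l2inner_tfshift_translate:
  "l2inner (tfshift ((0, a) + z) \<phi>) f = l2inner (tfshift z \<phi>) (modulation (- a) f)"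
  unfolding l2inner_def tfshift_def modulation_def
  by (intro Bochner_Integration.integral_cong refl) (simp add: cis_cnj cis_mult algebra_simps)

lemma lborel_integral_translate:
  fixes g :: "'a::euclidean_space \<Rightarrow> 'b::{banach, second_countable_topology}"
  shows "(\<integral>z. g z \<partial>lborel) = (\<integral>z. g (c + z) \<partial>lborel)"
proof (cases "g \<in> borel_measurable borel")
  case True
  have "(\<integral>z. g z \<partial>lborel) = (\<integral>z. g z \<partial>(distr lborel borel ((+) c)))"
    by (simp add: lborel_distr_plus)
  also have "\<dots> = (\<integral>z. g (c + z) \<partial>lborel)"
    by (rule integral_distr) (simp_all add: True)
  finally show ?thesis .
next
  case False
  have "(\<lambda>z. g (c + z)) \<notin> borel_measurable borel"
  proof
    assume "(\<lambda>z. g (c + z)) \<in> borel_measurable borel"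
    then have "(\<lambda>z. g (c + (- c + z))) \<in> borel_measurable borel"
      by (rule measurable_compose[rotated]) simp
    with False show False by simp
  qed
  with False have "\<not> integrable lborel g" "\<not> integrable lborel (\<lambda>z. g (c + z))"
    by (auto dest: borel_measurable_integrable)
  then show ?thesis by (simp add: not_integrable_integral_eq)
qed

lemma is_Bmu_modulation:
  fixes T :: "('d::euclidean_space \<Rightarrow> complex) \<Rightarrow> 'd \<Rightarrow> complex"
  assumes B: "is_Bmu M \<phi> T" and \<psi>: "L2 \<psi>"
  shows "AE t in lborel. T (modulation a \<psi>) t = modulation a (T \<psi>) t"
proof (rule AE_eq_if_l2inner_eq)
  show "L2 (T (modulation a \<psi>))" using B L2_modulation[OF \<psi>] by (simp add: is_Bmu_def)
  show "L2 (modulation a (T \<psi>))" using B \<psi> by (simp add: is_Bmu_def L2_modulation)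
  fix f :: "'d \<Rightarrow> complex" assume f: "L2 f"
  have "l2inner (T (modulation a \<psi>)) f
      = (\<integral>z. mconv M (stft \<phi> \<psi>) (z - (0, a)) * l2inner (tfshift z \<phi>) f \<partial>lborel)"
    using B L2_modulation[OF \<psi>] f by (simp add: is_Bmu_def stft_modulation[abs_def] mconv_translate)
  also have "\<dots> = (\<integral>z. mconv M (stft \<phi> \<psi>) z * l2inner (tfshift ((0, a) + z) \<phi>) f \<partial>lborel)"
    by (subst lborel_integral_translate[where c="(0, a)"]) simp
  also have "\<dots> = (\<integral>z. mconv M (stft \<phi> \<psi>) z * l2inner (tfshift z \<phi>) (modulation (- a) f) \<partial>lborel)"
    by (simp add: l2inner_tfshift_translate)
  also have "\<dots> = l2inner (T \<psi>) (modulation (- a) f)"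
    using B \<psi> L2_modulation[OF f] by (simp add: is_Bmu_def)
  also have "\<dots> = l2inner (modulation a (T \<psi>)) f"
    by (rule l2inner_modulation_right)
  finally show "l2inner (T (modulation a \<psi>)) f = l2inner (modulation a (T \<psi>)) f" .
qed

section \<open>A Riemann-Lebesgue lemma\<close>

lemma integral_lborel_prod_Basis:
  fixes f :: "'d::euclidean_space \<Rightarrow> real \<Rightarrow> complex"
  assumes [measurable]: "\<And>b. b \<in> Basis \<Longrightarrow> f b \<in> borel_measurable borel"
    and int: "\<And>b. b \<in> Basis \<Longrightarrow> integrable lborel (f b)"
  shows "(\<integral>x. (\<Prod>b\<in>Basis. f b (x \<bullet> b)) \<partial>(lborel::'d measure)) = (\<Prod>b\<in>Basis. (\<integral>x. f b x \<partial>lborel))"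
proof -
  interpret P: finite_product_sigma_finite "\<lambda>_. lborel::real measure" "Basis::'d set"
    by standard simp
  have m: "(\<lambda>x::'d. \<Prod>b\<in>Basis. f b (x \<bullet> b)) \<in> borel_measurable borel" by measurable
  have "(\<integral>x. (\<Prod>b\<in>Basis. f b (x \<bullet> b)) \<partial>(lborel::'d measure))
      = (\<integral>x. (\<Prod>b\<in>Basis. f b ((\<Sum>b'\<in>Basis. x b' *\<^sub>R b') \<bullet> b)) \<partial>(\<Pi>\<^sub>M b\<in>Basis. lborel))"
    by (subst lborel_eq[where 'a='d]) (simp add: integral_distr m)
  also have "\<dots> = (\<integral>x. (\<Prod>b\<in>Basis. f b (x b)) \<partial>(\<Pi>\<^sub>M b\<in>Basis. lborel))"
    by (intro Bochner_Integration.integral_cong refl prod.cong)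
      (simp_all add: inner_sum_left inner_Basis if_distrib cong: if_cong)
  also have "\<dots> = (\<Prod>b\<in>Basis. (\<integral>x. f b x \<partial>lborel))"
    by (rule P.product_integral_prod) (auto intro: int)
  finally show ?thesis .
qed

lemma integral_interval_cis:
  fixes R :: nat and j :: int
  shows "(\<integral>x. indicator {- real R .. real R} x *\<^sub>R cis (2 * pi * j * x) \<partial>lborel)
     = (if j = 0 then complex_of_real (2 * real R) else 0)"
proof (cases "j = 0")
  case True
  have "(\<integral>x. indicator {- real R .. real R} x *\<^sub>R (1::complex) \<partial>lborel)
      = complex_of_real (real R) - complex_of_real (- real R)"
    by (rule integral_FTC_atLeastAtMost) (auto intro!: derivative_eq_intros continuous_intros
        simp: has_vector_derivative_def fun_eq_iff scaleR_conv_of_real)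
  then show ?thesis using True by simp
next
  case False
  define F where "F x = cis (2 * pi * j * x) / (\<i> * (2 * pi * j))" for x
  have "(\<integral>x. indicator {- real R .. real R} x *\<^sub>R cis (2 * pi * j * x) \<partial>lborel)
      = F (real R) - F (- real R)"
  proof (rule integral_FTC_atLeastAtMost)
    fix x
    show "(F has_vector_derivative cis (2 * pi * real_of_int j * x)) (at x within {- real R..real R})"
      unfolding F_def has_vector_derivative_def using False
      by (auto intro!: derivative_eq_intros simp: fun_eq_iff scaleR_conv_of_real field_simps)
  qed (auto intro!: continuous_intros)
  also have "\<dots> = 0"
    using cis_multiple_2pi[of "real_of_int (j * int R)"] cis_multiple_2pi[of "real_of_int (- j * int R)"]
    by (simp add: F_def mult.assoc mult.left_commute)
  finally show ?thesis using False by simp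
qed

text \<open>Integer side lengths make the exponentials cis (2\<pi> n e\<cdot>t), n \<in> \<nat>, orthogonal on the cube.\<close>

definition cube :: "nat \<Rightarrow> 'd::euclidean_space set" where
  "cube R = cbox (- (real R *\<^sub>R One)) (real R *\<^sub>R One)"

lemma mem_cube: "t \<in> cube R \<longleftrightarrow> (\<forall>b\<in>Basis. \<bar>t \<bullet> b\<bar> \<le> real R)"
  by (auto simp: cube_def mem_box abs_le_iff inner_simps)

lemma sets_cube [measurable]: "cube R \<in> sets borel"
  by (simp add: cube_def)

lemma mem_cube_if_norm_le: "norm t \<le> real R \<Longrightarrow> t \<in> cube R"
  using Basis_le_norm by (auto simp: mem_cube intro: order_trans)

lemma L2_indicator_cube: "L2 (\<lambda>t::'d::euclidean_space. indicator (cube R) t :: complex)"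
proof -
  have "integrable lborel (\<lambda>t::'d. indicator (cube R) t *\<^sub>R (1::real))"
    by (rule borel_integrable_compact) (simp_all add: cube_def)
  moreover have "(cmod (indicator (cube R) t :: complex))\<^sup>2 = indicator (cube R) t *\<^sub>R (1::real)" for t :: 'd
    by (simp add: indicator_def)
  ultimately show ?thesis by (simp add: L2_def)
qed

lemma integral_cube_cis:
  fixes e :: "'d::euclidean_space" and j :: int
  assumes e: "e \<in> Basis"
  shows "(\<integral>t. indicator (cube R) t * cis (2 * pi * j * (e \<bullet> t)) \<partial>(lborel::'d measure))
       = (if j = 0 then complex_of_real ((2 * real R) ^ DIM('d)) else 0)"
proof -
  define f where "f b x = indicator {- real R .. real R} x *\<^sub>R cis (2 * pi * (if b = e then j else 0) * x)"
    for b :: 'd and x :: real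
  have [measurable]: "f b \<in> borel_measurable borel" for b unfolding f_def by measurable
  have f_integrable: "integrable lborel (f b)" for b
    unfolding f_def by (rule borel_integrable_compact) (auto intro!: continuous_intros)
  have "indicator (cube R) t * cis (2 * pi * j * (e \<bullet> t)) = (\<Prod>b\<in>Basis. f b (t \<bullet> b))" for t :: 'd
  proof (cases "t \<in> cube R")
    case True
    then have "(\<Prod>b\<in>Basis. f b (t \<bullet> b)) = (\<Prod>b\<in>Basis. if b = e then cis (2 * pi * j * (t \<bullet> b)) else 1)"
      by (intro prod.cong) (auto simp: f_def mem_cube abs_le_iff)
    with True e show ?thesis by (simp add: inner_commute)
  next
    case False
    then obtain b where "b \<in> Basis" "\<bar>t \<bullet> b\<bar> > real R" by (auto simp: mem_cube not_le)
    then have "(\<Prod>b\<in>Basis. f b (t \<bullet> b)) = 0"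
      by (intro prod_zero bexI[of _ b]) (auto simp: f_def abs_le_iff indicator_def)
    with False show ?thesis by simp
  qed
  then have "(\<integral>t. indicator (cube R) t * cis (2 * pi * j * (e \<bullet> t)) \<partial>(lborel::'d measure))
      = (\<Prod>b\<in>Basis. (\<integral>x. f b x \<partial>lborel))"
    by (simp add: integral_lborel_prod_Basis f_integrable)
  also have "\<dots> = (\<Prod>b\<in>Basis. (if b = e \<and> j \<noteq> 0 then 0 else complex_of_real (2 * real R)))"
    by (intro prod.cong refl) (simp add: f_def integral_interval_cis)
  also have "\<dots> = (if j = 0 then complex_of_real ((2 * real R) ^ DIM('d)) else 0)"
    using e by (auto simp: prod_zero)
  finally show ?thesis .
qed

lemma fourier_coeff_cube_tendsto_zero:
  fixes G :: "'d::euclidean_space \<Rightarrow> complex"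
  assumes e: "e \<in> Basis" and G: "L2 G" and supp: "\<And>t. t \<notin> cube R \<Longrightarrow> G t = 0"
  shows "(\<lambda>n::nat. \<integral>t. cis (2 * pi * real n * (e \<bullet> t)) * G t \<partial>lborel) \<longlonglongrightarrow> 0"
proof -
  define w where "w n t = indicator (cube R) t * cis (- (2 * pi * real n * (e \<bullet> t)))" for n :: nat and t :: 'd
  have w: "L2 (w n)" for n
    unfolding w_def mult.commute[of "indicator _ _"]
    by (rule L2_mult_bounded[OF L2_indicator_cube, where C=1]) simp_all
  have "l2inner (w n) (w m) = (if n = m then complex_of_real ((2 * real R) ^ DIM('d)) else 0)" for n m
  proof -
    have "l2inner (w n) (w m)
        = (\<integral>t. indicator (cube R) t * cis (2 * pi * real_of_int (int m - int n) * (e \<bullet> t)) \<partial>lborel)"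
      unfolding l2inner_def w_def
      by (intro Bochner_Integration.integral_cong refl) (simp add: cis_cnj cis_mult indicator_def algebra_simps)
    also have "\<dots> = (if int m - int n = 0 then complex_of_real ((2 * real R) ^ DIM('d)) else 0)"
      by (rule integral_cube_cis[OF e])
    finally show ?thesis by auto
  qed
  from bessel_l2inner[OF G w this]
  have bessel: "(\<Sum>n<N. (cmod (l2inner G (w n)))\<^sup>2) \<le> (2 * real R) ^ DIM('d) * (l2norm G)\<^sup>2" for N .
  have coeff: "l2inner G (w n) = (\<integral>t. cis (2 * pi * real n * (e \<bullet> t)) * G t \<partial>lborel)" for n
    unfolding l2inner_def w_def
    by (intro Bochner_Integration.integral_cong refl) (auto simp: cis_cnj indicator_def supp)
  have "summable (\<lambda>n. (cmod (l2inner G (w n)))\<^sup>2)"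
    by (rule bounded_imp_summable[where B="(2 * real R) ^ DIM('d) * (l2norm G)\<^sup>2"])
      (use bessel[of "Suc _"] in \<open>auto simp: lessThan_Suc_atMost atLeast0AtMost\<close>)
  then have "(\<lambda>n. (cmod (l2inner G (w n)))\<^sup>2) \<longlonglongrightarrow> 0" by (rule summable_LIMSEQ_zero)
  then have "(\<lambda>n. sqrt ((cmod (l2inner G (w n)))\<^sup>2)) \<longlonglongrightarrow> sqrt 0"
    by (intro tendsto_intros)
  then have "(\<lambda>n. norm (l2inner G (w n))) \<longlonglongrightarrow> 0" by simp
  then have "(\<lambda>n. l2inner G (w n)) \<longlonglongrightarrow> 0" by (rule tendsto_norm_zero_cancel)
  then show ?thesis by (simp add: coeff)
qed

lemma integrable_bounded_mult:
  fixes f g :: "'a \<Rightarrow> complex"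
  assumes f: "integrable M f" and [measurable]: "g \<in> borel_measurable M"
    and bound: "\<And>x. cmod (g x) \<le> C"
  shows "integrable M (\<lambda>x. g x * f x)"
proof (rule Bochner_Integration.integrable_bound)
  show "integrable M (\<lambda>x. complex_of_real C * f x)" using f by simp
  show "AE x in M. norm (g x * f x) \<le> norm (complex_of_real C * f x)"
    using bound by (intro AE_I2) (auto simp: norm_mult intro!: mult_right_mono order_trans[OF bound abs_ge_self])
qed (use f in simp)

lemma tendsto_zero_if_uniformly_approximable:
  fixes a :: "nat \<Rightarrow> 'a::real_normed_vector"
  assumes approx: "\<And>\<epsilon>. \<epsilon> > 0 \<Longrightarrow> \<exists>b. b \<longlonglongrightarrow> 0 \<and> (\<forall>n. norm (a n - b n) \<le> \<epsilon>)"
  shows "a \<longlonglongrightarrow> 0"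
proof (rule LIMSEQ_I)
  fix r :: real assume "r > 0"
  then obtain b where b: "b \<longlonglongrightarrow> 0" "\<And>n. norm (a n - b n) \<le> r / 2"
    using approx[of "r / 2"] by auto
  obtain N where N: "\<And>n. n \<ge> N \<Longrightarrow> norm (b n) < r / 2"
    using LIMSEQ_D[OF b(1), of "r / 2"] \<open>r > 0\<close> by auto
  have "norm (a n) < r" if "n \<ge> N" for n
    using norm_triangle_ineq[of "a n - b n" "b n"] b(2)[of n] N[OF that] by simp
  then show "\<exists>N. \<forall>n\<ge>N. norm (a n - 0) < r" by auto
qed

definition cube_truncation :: "('d::euclidean_space \<Rightarrow> complex) \<Rightarrow> nat \<Rightarrow> 'd \<Rightarrow> complex" where
  "cube_truncation f R t = indicator (cube R \<inter> {t. cmod (f t) \<le> real R}) t * f t"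

lemma cube_truncation_outside_cube: "t \<notin> cube R \<Longrightarrow> cube_truncation f R t = 0"
  by (simp add: cube_truncation_def)

lemma L2_cube_truncation:
  assumes [measurable]: "f \<in> borel_measurable lborel"
  shows "L2 (cube_truncation f R)"
proof -
  have "L2 (\<lambda>t. (indicator {t. cmod (f t) \<le> real R} t * f t) * indicator (cube R) t)"
    by (rule L2_mult_bounded[OF L2_indicator_cube, where C="real R"]) (simp_all add: indicator_def)
  moreover have "cube_truncation f R = (\<lambda>t. (indicator {t. cmod (f t) \<le> real R} t * f t) * indicator (cube R) t)"
    by (auto simp: fun_eq_iff cube_truncation_def indicator_def)
  ultimately show ?thesis by simp
qed

lemma cube_truncation_tendsto_L1:
  fixes f :: "'d::euclidean_space \<Rightarrow> complex"
  assumes f: "integrable lborel f"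
  shows "(\<lambda>R. \<integral>t. cmod (f t - cube_truncation f R t) \<partial>lborel) \<longlonglongrightarrow> 0"
proof -
  have [measurable]: "f \<in> borel_measurable lborel" using f by (rule borel_measurable_integrable)
  have "(\<lambda>R. \<integral>t. cmod (f t - cube_truncation f R t) \<partial>lborel) \<longlonglongrightarrow> (\<integral>t. (0::real) \<partial>(lborel::'d measure))"
  proof (rule Bochner_Integration.integral_dominated_convergence[where w="\<lambda>t. cmod (f t)"])
    show "AE t in lborel. (\<lambda>R. cmod (f t - cube_truncation f R t)) \<longlonglongrightarrow> 0"
    proof (rule AE_I2, rule tendsto_eventually, rule eventually_sequentiallyI)
      fix t and R :: nat assume "nat \<lceil>max (norm t) (cmod (f t))\<rceil> \<le> R"
      then have "t \<in> cube R" "cmod (f t) \<le> real R" using mem_cube_if_norm_le[of t R] by auto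
      then show "cmod (f t - cube_truncation f R t) = 0" by (simp add: cube_truncation_def)
    qed
    show "AE t in lborel. norm (cmod (f t - cube_truncation f R t)) \<le> cmod (f t)" for R
      by (intro AE_I2) (simp add: cube_truncation_def indicator_def)
  qed (simp_all add: f cube_truncation_def)
  then show ?thesis by simp
qed

text \<open>Bessel's inequality handles L^2 functions supported in a cube; these approximate an
  integrable function in L^1 uniformly in the frequency.\<close>

lemma riemann_lebesgue_Basis:
  fixes f :: "'d::euclidean_space \<Rightarrow> complex"
  assumes e: "e \<in> Basis" and f: "integrable lborel f"
  shows "(\<lambda>n::nat. \<integral>t. cis (2 * pi * real n * (e \<bullet> t)) * f t \<partial>lborel) \<longlonglongrightarrow> 0"
proof (rule tendsto_zero_if_uniformly_approximable)
  have [measurable]: "f \<in> borel_measurable lborel" using f by (rule borel_measurable_integrable)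
  define F where "F n h = (\<integral>t. cis (2 * pi * real n * (e \<bullet> t)) * h t \<partial>lborel)" for n and h :: "'d \<Rightarrow> complex"
  have F_diff: "norm (F n f - F n h) \<le> (\<integral>t. cmod (f t - h t) \<partial>lborel)" if h: "integrable lborel h" for n h
  proof -
    have "integrable lborel (\<lambda>t. cis (2 * pi * real n * (e \<bullet> t)) * k t)" if "integrable lborel k" for k
      by (rule integrable_bounded_mult[OF that, where C=1]) simp_all
    then have "F n f - F n h = (\<integral>t. cis (2 * pi * real n * (e \<bullet> t)) * (f t - h t) \<partial>lborel)"
      using f h by (simp add: F_def right_diff_distrib)
    also have "norm \<dots> \<le> (\<integral>t. cmod (f t - h t) \<partial>lborel)"
      using integral_norm_bound[of lborel "\<lambda>t. cis (2 * pi * real n * (e \<bullet> t)) * (f t - h t)"]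
      by (simp add: norm_mult)
    finally show ?thesis .
  qed
  fix \<epsilon> :: real assume "\<epsilon> > 0"
  obtain R where R: "(\<integral>t. cmod (f t - cube_truncation f R t) \<partial>lborel) < \<epsilon>"
    using order_tendstoD(2)[OF cube_truncation_tendsto_L1[OF f] \<open>\<epsilon> > 0\<close>]
    by (auto simp: eventually_sequentially)
  have "integrable lborel (cube_truncation f R)"
    unfolding cube_truncation_def by (rule integrable_bounded_mult[OF f, where C=1]) (simp_all add: indicator_def)
  then have "\<forall>n. norm (F n f - F n (cube_truncation f R)) \<le> \<epsilon>"
    using F_diff R by (meson less_imp_le order_trans)
  moreover have "(\<lambda>n. F n (cube_truncation f R)) \<longlonglongrightarrow> 0"
    unfolding F_def
    by (rule fourier_coeff_cube_tendsto_zero[OF e L2_cube_truncation cube_truncation_outside_cube]) simp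
  ultimately show "\<exists>b. b \<longlonglongrightarrow> 0 \<and> (\<forall>n. norm ((\<integral>t. cis (2 * pi * real n * (e \<bullet> t)) * f t \<partial>lborel) - b n) \<le> \<epsilon>)"
    unfolding F_def by blast
qed

section \<open>Compact modulation-covariant operators vanish\<close>

lemma l2inner_modulation_tendsto_zero:
  assumes "e \<in> Basis" "L2 g" "L2 h"
  shows "(\<lambda>n::nat. l2inner (modulation (real n *\<^sub>R e) g) h) \<longlonglongrightarrow> 0"
  using riemann_lebesgue_Basis[OF assms(1) integrable_l2inner[OF assms(2,3)]]
  by (simp add: l2inner_def modulation_def mult.assoc)

lemma compact_op_modulation_covariant_AE_zero:
  fixes T :: "('d::euclidean_space \<Rightarrow> complex) \<Rightarrow> 'd \<Rightarrow> complex"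
  assumes compact: "compact_op T" and T: "\<And>\<psi>. L2 \<psi> \<Longrightarrow> L2 (T \<psi>)"
    and covariant: "\<And>a \<psi>. L2 \<psi> \<Longrightarrow> AE t in lborel. T (modulation a \<psi>) t = modulation a (T \<psi>) t"
    and \<psi>: "L2 \<psi>"
  shows "AE t in lborel. T \<psi> t = 0"
proof -
  obtain e :: 'd where e: "e \<in> Basis" using nonempty_Basis by blast
  define g where "g = T \<psi>"
  define u where "u n = modulation (real n *\<^sub>R e) g" for n :: nat
  have g: "L2 g" and u: "L2 (u n)" for n
    using T[OF \<psi>] by (simp_all add: g_def u_def L2_modulation)
  have "range (\<lambda>n. l2norm (modulation (real n *\<^sub>R e) \<psi>)) = {l2norm \<psi>}" by auto
  then obtain r h where r: "strict_mono r" and h: "L2 h"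
    and "(\<lambda>n. l2norm (\<lambda>t. T (modulation (real (r n) *\<^sub>R e) \<psi>) t - h t)) \<longlonglongrightarrow> 0"
    using compact[unfolded compact_op_def, rule_format, of "\<lambda>n. modulation (real n *\<^sub>R e) \<psi>"] \<psi>
    by (auto simp: L2_modulation)
  moreover have "l2norm (\<lambda>t. T (modulation (real (r n) *\<^sub>R e) \<psi>) t - h t) = l2norm (\<lambda>t. u (r n) t - h t)" for n
    using covariant[OF \<psi>, of "real (r n) *\<^sub>R e"]
    by (intro l2norm_cong_AE L2_diff T L2_modulation \<psi> h u) (auto simp: u_def g_def elim: AE_mp)
  ultimately have lim: "(\<lambda>n. l2norm (\<lambda>t. u (r n) t - h t)) \<longlonglongrightarrow> 0" by simp
  have "(\<lambda>n. l2inner (u (r n)) h) \<longlonglongrightarrow> l2inner h h"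
    by (rule l2inner_tendsto_if_l2norm_tendsto[where u="\<lambda>n. u (r n)"]) (use u h lim in auto)
  moreover have "(\<lambda>n. l2inner (u (r n)) h) \<longlonglongrightarrow> 0"
    using LIMSEQ_subseq_LIMSEQ[OF l2inner_modulation_tendsto_zero[OF e g h] r]
    by (simp add: u_def o_def)
  ultimately have "l2inner h h = 0" by (rule LIMSEQ_unique)
  then have "l2norm h = 0" by (simp add: l2inner_self)
  then have "AE t in lborel. h t = 0" using h by (simp add: l2norm_eq_0_iff)
  then have "l2norm (\<lambda>t. u (r n) t - h t) = l2norm (u (r n))" for n
    by (intro l2norm_cong_AE L2_diff u h) (auto elim: AE_mp)
  then have "l2norm (\<lambda>t. u (r n) t - h t) = l2norm g" for n
    by (simp add: u_def)
  with lim have "l2norm g = 0" by (simp add: LIMSEQ_const_iff)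
  then show ?thesis using g by (simp add: l2norm_eq_0_iff g_def)
qed

theorem theorem4p11:
  fixes M :: "nat \<Rightarrow> ('d::euclidean_space \<times> 'd) measure"
    and \<phi> :: "'d \<Rightarrow> complex"
    and T :: "('d \<Rightarrow> complex) \<Rightarrow> ('d \<Rightarrow> complex)"
  assumes "cmeasure M"
    and "M1 \<phi>"
    and "is_Bmu M \<phi> T"
    and "\<exists>\<psi>. L2 \<psi> \<and> \<not> (AE t in lborel. T \<psi> t = 0)"
  shows "\<not> compact_op T"
proof
  assume "compact_op T"
  obtain \<psi> where \<psi>: "L2 \<psi>" and nonzero: "\<not> (AE t in lborel. T \<psi> t = 0)"
    using assms(4) by blast
  have "AE t in lborel. T \<psi> t = 0"
  proof (rule compact_op_modulation_covariant_AE_zero[OF \<open>compact_op T\<close> _ _ \<psi>])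
    show "L2 (T \<psi>')" if "L2 \<psi>'" for \<psi>' using assms(3) that by (simp add: is_Bmu_def)
    show "AE t in lborel. T (modulation a \<psi>') t = modulation a (T \<psi>') t" if "L2 \<psi>'" for a \<psi>'
      using assms(3) that by (rule is_Bmu_modulation)
  qed
  with nonzero show False by simp
qed

end
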